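(* Let $n\geqslant0$ be an integer and $f\colon[a,b]\to\mathbb{R}$ be such that $f,f',\dots,f^{(n)}$ are continuous on $[a,b]$ and $LD_{n+1}f$ exists almost everywhere on $[a,b]$. If $LD_{n+1}f$ is Laplace integrable on $[a,b]$ with \[f^{(n)}(x)-f^{(n)}(a)=\int_a^xLD_{n+1}f\quad\text{for all }x\in[a,b],\] then for all $x\in[a,b]$, \[f(x)=\sum_{k=0}^n\frac{f^{(k)}(a)}{k!}(x-a)^k+R_{n,a}(x),\qquad R_{n,a}(x)=\frac{1}{n!}\int_a^xLD_{n+1}f(t)(x-t)^n\,dt,\] where the last integral is a Laplace integral, and moreover \[\sup_{x\in[a,b]}|R_{n,a}(x)|\leqslant\frac{(b-a)^n}{n!}\|LD_{n+1}f\|_{[a,b]}.\]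
   Context: For $f$ with $f,\dots,f^{(n)}$ continuous near $x$, $LD_{n+1}f(x)$ denotes the $(n+1)$-th order Laplace derivative: the common value, when both limits exist and are equal, of $\lim_{s\to\infty}s^{n+2}\int_0^\delta e^{-st}\big[f(x+t)-\sum_{i=0}^n\frac{t^i}{i!}f^{(i)}(x)\big]dt$ and $\lim_{s\to\infty}(-1)^{n+1}s^{n+2}\int_0^\delta e^{-st}\big[f(x-t)-\sum_{i=0}^n\frac{(-t)^i}{i!}f^{(i)}(x)\big]dt$ for some $\delta>0$ (one-sided at endpoints); for $n=0$ this is $LD_1f$. Laplace integral on $[a,b]$: with lower/upper Laplace derivates $\underline{LD}_1F(x)$, $\overline{LD}_1F(x)$ being the minimum of the $\liminf$'s, resp. maximum of the $\limsup$'s, as $s\to\infty$ of $s^2\int_0^\delta e^{-st}[F(x+t)-F(x)]dt$ and $(-s^2)\int_0^\delta e^{-st}[F(x-t)-F(x)]dt$, a major function of $h$ is a continuous $U$ with $\underline{LD}_1U\geqslant h$, $\underline{LD}_1U>-\infty$ everywhere, a minor function a continuous $V$ with $\overline{LD}_1V\leqslant h$, $\overline{LD}_1V<\infty$ everywhere, and $h$ is Laplace integrable if $\sup_V(V(b)-V(a))=\inf_U(U(b)-U(a))$ is finite, the value being $\int_a^bh$ (values on null sets are irrelevant). Alexiewicz norm: $\|h\|_{[a,b]}=\sup_{x\in[a,b]}|\int_a^xh|$. *)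

theory Defs
  imports "HOL-Analysis.Analysis"
begin

text \<open>F k stands for the k-th derivative of f (F 0 = f). The expressions below are
 the right and left Laplace-derivative expressions with parameter s and window delta.\<close>

definition LD_right :: "(nat \<Rightarrow> real \<Rightarrow> real) \<Rightarrow> nat \<Rightarrow> real \<Rightarrow> real \<Rightarrow> real \<Rightarrow> real" where
  "LD_right F n x \<delta> s = s ^ (n + 2) *
     integral {0..\<delta>} (\<lambda>t. exp (- s * t) * (F 0 (x + t) - (\<Sum>i\<le>n. t ^ i / fact i * F i x)))"

definition LD_left :: "(nat \<Rightarrow> real \<Rightarrow> real) \<Rightarrow> nat \<Rightarrow> real \<Rightarrow> real \<Rightarrow> real \<Rightarrow> real" where
  "LD_left F n x \<delta> s = (-1) ^ (n + 1) * s ^ (n + 2) *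
     integral {0..\<delta>} (\<lambda>t. exp (- s * t) * (F 0 (x - t) - (\<Sum>i\<le>n. (- t) ^ i / fact i * F i x)))"

text \<open>has_LD F n c d x L: the (n+1)-th order Laplace derivative of F 0, relative to the
 interval [c,d] (one-sided at endpoints), exists at x and equals L.\<close>

definition has_LD :: "(nat \<Rightarrow> real \<Rightarrow> real) \<Rightarrow> nat \<Rightarrow> real \<Rightarrow> real \<Rightarrow> real \<Rightarrow> real \<Rightarrow> bool" where
  "has_LD F n c d x L \<longleftrightarrow>
     (\<exists>\<delta>>0. (x < d \<longrightarrow> x + \<delta> \<le> d \<and> ((LD_right F n x \<delta>) \<longlongrightarrow> L) at_top)
          \<and> (c < x \<longrightarrow> c \<le> x - \<delta> \<and> ((LD_left F n x \<delta>) \<longlongrightarrow> L) at_top))"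

definition LDr1 :: "(real \<Rightarrow> real) \<Rightarrow> real \<Rightarrow> real \<Rightarrow> real \<Rightarrow> real" where
  "LDr1 U x \<delta> s = s\<^sup>2 * integral {0..\<delta>} (\<lambda>t. exp (- s * t) * (U (x + t) - U x))"

definition LDl1 :: "(real \<Rightarrow> real) \<Rightarrow> real \<Rightarrow> real \<Rightarrow> real \<Rightarrow> real" where
  "LDl1 U x \<delta> s = - (s\<^sup>2) * integral {0..\<delta>} (\<lambda>t. exp (- s * t) * (U (x - t) - U x))"

definition lowLD :: "(real \<Rightarrow> real) \<Rightarrow> real \<Rightarrow> real \<Rightarrow> real \<Rightarrow> real \<Rightarrow> ereal" where
  "lowLD U c d \<delta> x =
     min (if x < d then Liminf at_top (\<lambda>s. ereal (LDr1 U x \<delta> s)) else \<infinity>)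
         (if c < x then Liminf at_top (\<lambda>s. ereal (LDl1 U x \<delta> s)) else \<infinity>)"

definition upLD :: "(real \<Rightarrow> real) \<Rightarrow> real \<Rightarrow> real \<Rightarrow> real \<Rightarrow> real \<Rightarrow> ereal" where
  "upLD U c d \<delta> x =
     max (if x < d then Limsup at_top (\<lambda>s. ereal (LDr1 U x \<delta> s)) else -\<infinity>)
         (if c < x then Limsup at_top (\<lambda>s. ereal (LDl1 U x \<delta> s)) else -\<infinity>)"

definition admissible_delta :: "real \<Rightarrow> real \<Rightarrow> real \<Rightarrow> real \<Rightarrow> bool" where
  "admissible_delta c d x \<delta> \<longleftrightarrow> \<delta> > 0 \<and> (x < d \<longrightarrow> x + \<delta> \<le> d) \<and> (c < x \<longrightarrow> c \<le> x - \<delta>)"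

definition laplace_major :: "(real \<Rightarrow> real) \<Rightarrow> real \<Rightarrow> real \<Rightarrow> (real \<Rightarrow> real) \<Rightarrow> bool" where
  "laplace_major h c d U \<longleftrightarrow> continuous_on {c..d} U \<and>
     (\<forall>x\<in>{c..d}. \<exists>\<delta>. admissible_delta c d x \<delta> \<and>
        lowLD U c d \<delta> x \<ge> ereal (h x) \<and> lowLD U c d \<delta> x > -\<infinity>)"

definition laplace_minor :: "(real \<Rightarrow> real) \<Rightarrow> real \<Rightarrow> real \<Rightarrow> (real \<Rightarrow> real) \<Rightarrow> bool" where
  "laplace_minor h c d V \<longleftrightarrow> continuous_on {c..d} V \<and>
     (\<forall>x\<in>{c..d}. \<exists>\<delta>. admissible_delta c d x \<delta> \<and>
        upLD V c d \<delta> x \<le> ereal (h x) \<and> upLD V c d \<delta> x < \<infinity>)"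

definition laplace_upper_int :: "(real \<Rightarrow> real) \<Rightarrow> real \<Rightarrow> real \<Rightarrow> ereal" where
  "laplace_upper_int h c d = (INF U \<in> {U. laplace_major h c d U}. ereal (U d - U c))"

definition laplace_lower_int :: "(real \<Rightarrow> real) \<Rightarrow> real \<Rightarrow> real \<Rightarrow> ereal" where
  "laplace_lower_int h c d = (SUP V \<in> {V. laplace_minor h c d V}. ereal (V d - V c))"

definition laplace_integrable :: "(real \<Rightarrow> real) \<Rightarrow> real \<Rightarrow> real \<Rightarrow> bool" where
  "laplace_integrable h c d \<longleftrightarrow>
     laplace_lower_int h c d = laplace_upper_int h c d \<and> \<bar>laplace_upper_int h c d\<bar> \<noteq> \<infinity>"

definition laplace_integral :: "(real \<Rightarrow> real) \<Rightarrow> real \<Rightarrow> real \<Rightarrow> real" where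
  "laplace_integral h c d = real_of_ereal (laplace_upper_int h c d)"

definition alexiewicz_norm :: "(real \<Rightarrow> real) \<Rightarrow> real \<Rightarrow> real \<Rightarrow> real" where
  "alexiewicz_norm h c d = (SUP x \<in> {c..d}. \<bar>laplace_integral h c x\<bar>)"

end

(*
  Put w(t) = (x - t)^n. If U is a major function of g on [a,x], then the indefinite
  Stieltjes integral M(y) = int_a^y w dU = U(y) w(y) - U(a) w(a) - int_a^y U w' is a major
  function of g w: the difference M - w(t) U is differentiable with derivative 0 at t, so the
  Laplace derivates of M at t are w(t) >= 0 times those of U. Likewise for minor functions.
  Because F_n(y) - F_n(a) is the Laplace integral of g over [a,y], major and minor functions
  of g can be chosen uniformly close to F_n; hence g w is Laplace integrable with integral
  int_a^x w dF_n, which Taylor's formula with integral remainder identifies with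
  n! (f(x) - T_n(x)). Since w >= 0 is nonincreasing, |int_a^x w dF_n| <= w(a) sup |F_n - F_n(a)|,
  giving the bound by the Alexiewicz norm.
*)

theory Submission
  imports Defs "HOL-Real_Asymp.Real_Asymp"
begin

section \<open>Laplace difference quotients\<close>

text \<open>Since \<open>s\<^sup>2 * \<integral>\<^sub>0\<^sup>\<infinity> exp (- s * t) * t dt = 1\<close>, this is a weighted difference quotient
  of \<open>\<phi>\<close> at \<open>0\<close>.\<close>

definition laplace_quotient :: "(real \<Rightarrow> real) \<Rightarrow> real \<Rightarrow> real \<Rightarrow> real" where
  "laplace_quotient \<phi> \<delta> s = s\<^sup>2 * integral {0..\<delta>} (\<lambda>t. exp (- s * t) * \<phi> t)"

lemma LDr1_eq_laplace_quotient: "LDr1 U x \<delta> s = laplace_quotient (\<lambda>t. U (x + t) - U x) \<delta> s"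
  unfolding LDr1_def laplace_quotient_def ..

lemma LDl1_eq_laplace_quotient: "LDl1 U x \<delta> s = - laplace_quotient (\<lambda>t. U (x - t) - U x) \<delta> s"
  unfolding LDl1_def laplace_quotient_def by simp

lemma laplace_quotient_uminus: "laplace_quotient (\<lambda>t. - \<phi> t) \<delta> s = - laplace_quotient \<phi> \<delta> s"
  unfolding laplace_quotient_def by simp

lemma laplace_quotient_add:
  assumes "continuous_on {0..\<delta>} \<phi>" "continuous_on {0..\<delta>} \<psi>"
  shows "laplace_quotient (\<lambda>t. \<phi> t + k * \<psi> t) \<delta> s = laplace_quotient \<phi> \<delta> s + k * laplace_quotient \<psi> \<delta> s"
proof -
  have "(\<lambda>t. exp (- s * t) * \<phi> t) integrable_on {0..\<delta>}"
    "(\<lambda>t. k * (exp (- s * t) * \<psi> t)) integrable_on {0..\<delta>}"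
    by (intro integrable_continuous_real continuous_intros assms)+
  from integral_add[OF this] show ?thesis
    unfolding laplace_quotient_def by (simp add: distrib_left mult.left_commute)
qed

lemma laplace_quotient_nonpos:
  assumes "continuous_on {0..\<delta>} \<phi>" "\<And>t. t \<in> {0..\<delta>} \<Longrightarrow> \<phi> t \<le> 0"
  shows "laplace_quotient \<phi> \<delta> s \<le> 0"
proof -
  have "integral {0..\<delta>} (\<lambda>t. exp (- s * t) * \<phi> t) \<le> integral {0..\<delta>} (\<lambda>t. 0)"
    by (intro integral_le integrable_continuous_real continuous_intros assms)
      (simp_all add: assms(2) mult_nonneg_nonpos)
  then show ?thesis
    unfolding laplace_quotient_def by (simp add: mult_nonneg_nonpos)
qed

lemma laplace_quotient_ident:
  assumes s: "s > 0" and "\<delta> \<ge> 0"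
  shows "laplace_quotient (\<lambda>t. t) \<delta> s = 1 - (1 + s * \<delta>) * exp (- s * \<delta>)"
proof -
  define G where "G t = - (t / s + 1 / s\<^sup>2) * exp (- s * t)" for t
  have "((\<lambda>t. exp (- s * t) * t) has_integral G \<delta> - G 0) {0..\<delta>}"
  proof (rule fundamental_theorem_of_calculus[OF \<open>\<delta> \<ge> 0\<close>])
    fix t
    have "(G has_real_derivative exp (- s * t) * t) (at t within {0..\<delta>})"
      unfolding G_def using s
      by (auto intro!: derivative_eq_intros simp: field_simps power2_eq_square)
    then show "(G has_vector_derivative exp (- s * t) * t) (at t within {0..\<delta>})"
      by (simp add: has_real_derivative_iff_has_vector_derivative)
  qed
  then show ?thesis
    using s unfolding laplace_quotient_def G_def
    by (simp add: integral_unique field_simps power2_eq_square)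
qed

lemma laplace_quotient_ident_le_1: "s > 0 \<Longrightarrow> \<delta> \<ge> 0 \<Longrightarrow> laplace_quotient (\<lambda>t. t) \<delta> s \<le> 1"
  by (simp add: laplace_quotient_ident)

lemma laplace_quotient_ident_tendsto_1:
  assumes "\<delta> > 0"
  shows "(laplace_quotient (\<lambda>t. t) \<delta> \<longlongrightarrow> 1) at_top"
proof -
  have "((\<lambda>s. 1 - (1 + s * \<delta>) * exp (- s * \<delta>)) \<longlongrightarrow> 1) at_top"
    using assms by real_asymp
  moreover have "\<forall>\<^sub>F s in at_top. 1 - (1 + s * \<delta>) * exp (- s * \<delta>) = laplace_quotient (\<lambda>t. t) \<delta> s"
    using eventually_gt_at_top[of 0] by eventually_elim (use assms in \<open>simp add: laplace_quotient_ident\<close>)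
  ultimately show ?thesis
    by (rule Lim_transform_eventually)
qed

lemma laplace_quotient_window:
  assumes cont: "continuous_on {0..\<delta>} \<phi>" and \<delta>': "0 < \<delta>'" "\<delta>' \<le> \<delta>"
  shows "((\<lambda>s. laplace_quotient \<phi> \<delta> s - laplace_quotient \<phi> \<delta>' s) \<longlongrightarrow> 0) at_top"
proof -
  obtain B where B: "\<forall>t\<in>{0..\<delta>}. \<bar>\<phi> t\<bar> \<le> B"
    using compact_imp_bounded[OF compact_continuous_image[OF cont compact_Icc]]
    unfolding bounded_real by auto
  have int: "(\<lambda>t. exp (- s * t) * \<phi> t) integrable_on {0..\<delta>}" for s
    by (intro integrable_continuous_real continuous_intros cont)
  have split: "laplace_quotient \<phi> \<delta> s - laplace_quotient \<phi> \<delta>' s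
      = s\<^sup>2 * integral {\<delta>'..\<delta>} (\<lambda>t. exp (- s * t) * \<phi> t)" for s
    using Henstock_Kurzweil_Integration.integral_combine[OF _ _ int[of s], of \<delta>'] \<delta>'
    unfolding laplace_quotient_def by (simp add: right_diff_distrib[symmetric] eq_diff_eq)
  have bound: "\<bar>s\<^sup>2 * integral {\<delta>'..\<delta>} (\<lambda>t. exp (- s * t) * \<phi> t)\<bar>
      \<le> s\<^sup>2 * exp (- s * \<delta>') * (B * (\<delta> - \<delta>'))" if "s \<ge> 0" for s
  proof -
    have "norm (integral {\<delta>'..\<delta>} (\<lambda>t. exp (- s * t) * \<phi> t)) \<le> integral {\<delta>'..\<delta>} (\<lambda>t. exp (- s * \<delta>') * B)"
    proof (rule integral_norm_bound_integral)
      show "(\<lambda>t. exp (- s * t) * \<phi> t) integrable_on {\<delta>'..\<delta>}"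
        by (rule integrable_on_subinterval[OF int]) (use \<delta>' in auto)
      fix t assume t: "t \<in> {\<delta>'..\<delta>}"
      have "exp (- s * t) \<le> exp (- s * \<delta>')"
        using t \<open>s \<ge> 0\<close> by (simp add: mult_left_mono)
      moreover have "\<bar>\<phi> t\<bar> \<le> B"
        using B t \<delta>' by auto
      ultimately show "norm (exp (- s * t) * \<phi> t) \<le> exp (- s * \<delta>') * B"
        by (simp add: abs_mult mult_mono)
    qed (intro integrable_continuous_real continuous_intros)
    then have "s\<^sup>2 * \<bar>integral {\<delta>'..\<delta>} (\<lambda>t. exp (- s * t) * \<phi> t)\<bar> \<le> s\<^sup>2 * (exp (- s * \<delta>') * B * (\<delta> - \<delta>'))"
      using \<delta>' by (intro mult_left_mono) (simp_all add: mult_ac)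
    then show ?thesis
      by (simp add: abs_mult mult_ac)
  qed
  have "((\<lambda>s. s\<^sup>2 * exp (- s * \<delta>') * (B * (\<delta> - \<delta>'))) \<longlongrightarrow> 0) at_top"
    using \<delta>' by real_asymp
  then show ?thesis
    unfolding split
    by (rule Lim_null_comparison[rotated]) (use eventually_ge_at_top[of 0] in \<open>eventually_elim, use bound in simp\<close>)
qed

lemma abs_laplace_quotient_le:
  assumes cont: "continuous_on {0..\<eta>} \<phi>" and bound: "\<forall>t\<in>{0..\<eta>}. \<bar>\<phi> t\<bar> \<le> e * t"
    and "s > 0" "\<eta> \<ge> 0" "e \<ge> 0"
  shows "\<bar>laplace_quotient \<phi> \<eta> s\<bar> \<le> e"
proof -
  have "norm (integral {0..\<eta>} (\<lambda>t. exp (- s * t) * \<phi> t)) \<le> integral {0..\<eta>} (\<lambda>t. e * (exp (- s * t) * t))"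
  proof (rule integral_norm_bound_integral)
    show "(\<lambda>t. exp (- s * t) * \<phi> t) integrable_on {0..\<eta>}" "(\<lambda>t. e * (exp (- s * t) * t)) integrable_on {0..\<eta>}"
      by (intro integrable_continuous_real continuous_intros cont)+
    show "norm (exp (- s * t) * \<phi> t) \<le> e * (exp (- s * t) * t)" if "t \<in> {0..\<eta>}" for t
      using bound that by (simp add: abs_mult mult.left_commute mult_left_mono)
  qed
  then have "\<bar>laplace_quotient \<phi> \<eta> s\<bar> \<le> s\<^sup>2 * (e * integral {0..\<eta>} (\<lambda>t. exp (- s * t) * t))"
    unfolding laplace_quotient_def abs_mult abs_power2 by (intro mult_left_mono) simp_all
  also have "\<dots> = e * laplace_quotient (\<lambda>t. t) \<eta> s"
    unfolding laplace_quotient_def by simp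
  also have "\<dots> \<le> e"
    using laplace_quotient_ident_le_1[OF \<open>s > 0\<close> \<open>\<eta> \<ge> 0\<close>] \<open>e \<ge> 0\<close> by (rule mult_left_le)
  finally show ?thesis .
qed

lemma laplace_quotient_tendsto_derivative:
  assumes cont: "continuous_on {0..\<delta>} \<phi>" and \<delta>: "\<delta> > 0" and "\<phi> 0 = 0"
    and deriv: "(\<phi> has_real_derivative L) (at 0 within {0..\<delta>})"
  shows "(laplace_quotient \<phi> \<delta> \<longlongrightarrow> L) at_top"
proof -
  define \<psi> where "\<psi> t = \<phi> t - L * t" for t
  have cont_\<psi>: "continuous_on {0..\<delta>} \<psi>"
    unfolding \<psi>_def by (intro continuous_intros cont)
  have "(laplace_quotient \<psi> \<delta> \<longlongrightarrow> 0) at_top"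
  proof (rule tendstoI)
    fix e :: real assume "e > 0"
    then obtain \<eta> where \<eta>: "\<eta> > 0" "\<forall>t\<in>{0..\<delta>}. \<bar>t\<bar> < \<eta> \<longrightarrow> \<bar>\<psi> t\<bar> \<le> e / 2 * \<bar>t\<bar>"
      using deriv \<open>\<phi> 0 = 0\<close> unfolding has_field_derivative_def has_derivative_within_alt \<psi>_def
      by (auto dest!: spec[of _ "e / 2"] simp: mult.commute)
    define \<eta>' where "\<eta>' = min (\<eta> / 2) \<delta>"
    have \<eta>': "0 < \<eta>'" "\<eta>' \<le> \<delta>" "\<eta>' < \<eta>"
      using \<eta> \<delta> unfolding \<eta>'_def by auto
    have small: "\<bar>laplace_quotient \<psi> \<eta>' s\<bar> \<le> e / 2" if "s > 0" for s
      using \<eta> \<eta>' \<open>s > 0\<close> \<open>e > 0\<close>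
      by (intro abs_laplace_quotient_le continuous_on_subset[OF cont_\<psi>]) auto
    have "\<forall>\<^sub>F s in at_top. \<bar>laplace_quotient \<psi> \<delta> s - laplace_quotient \<psi> \<eta>' s\<bar> < e / 2"
      using tendstoD[OF laplace_quotient_window[OF cont_\<psi> \<eta>'(1,2)], of "e / 2"] \<open>e > 0\<close> by simp
    then show "\<forall>\<^sub>F s in at_top. dist (laplace_quotient \<psi> \<delta> s) 0 < e"
      using eventually_gt_at_top[of 0]
    proof eventually_elim
      case (elim s)
      with small[OF elim(2)] show ?case
        unfolding dist_real_def by arith
    qed
  qed
  then have "((\<lambda>s. laplace_quotient \<psi> \<delta> s + L * laplace_quotient (\<lambda>t. t) \<delta> s) \<longlongrightarrow> 0 + L * 1) at_top"
    by (intro tendsto_intros laplace_quotient_ident_tendsto_1 \<delta>)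
  moreover have "laplace_quotient \<phi> \<delta> = (\<lambda>s. laplace_quotient \<psi> \<delta> s + L * laplace_quotient (\<lambda>t. t) \<delta> s)"
    using laplace_quotient_add[OF cont_\<psi> continuous_on_id, of L] unfolding \<psi>_def by (simp add: fun_eq_iff)
  ultimately show ?thesis
    by simp
qed

section \<open>Major and minor functions\<close>

definition liminf_at_top_ge :: "(real \<Rightarrow> real) \<Rightarrow> real \<Rightarrow> bool" where
  "liminf_at_top_ge X c \<longleftrightarrow> (\<forall>y<c. \<forall>\<^sub>F s in at_top. y < X s)"

lemma Liminf_at_top_ge_iff: "ereal c \<le> Liminf at_top (\<lambda>s. ereal (X s)) \<longleftrightarrow> liminf_at_top_ge X c"
  unfolding le_Liminf_iff liminf_at_top_ge_def
proof safe
  fix y assume "\<forall>y<ereal c. \<forall>\<^sub>F s in at_top. y < ereal (X s)" "y < c"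
  then show "\<forall>\<^sub>F s in at_top. y < X s"
    by (auto elim!: allE[of _ "ereal y"])
next
  fix y assume X: "\<forall>y<c. \<forall>\<^sub>F s in at_top. y < X s" and "y < ereal c"
  then show "\<forall>\<^sub>F s in at_top. y < ereal (X s)"
    by (cases y) auto
qed

lemma Limsup_at_top_le_iff:
  "Limsup at_top (\<lambda>s. ereal (X s)) \<le> ereal c \<longleftrightarrow> liminf_at_top_ge (\<lambda>s. - X s) (- c)"
proof -
  have "Limsup at_top (\<lambda>s. ereal (X s)) = - Liminf at_top (\<lambda>s. ereal (- X s))"
    using ereal_Limsup_uminus[of at_top "\<lambda>s. ereal (- X s)"] by simp
  then show ?thesis
    by (simp add: ereal_uminus_le_reorder flip: Liminf_at_top_ge_iff)
qed

lemma tendsto_imp_liminf_at_top_ge: "(X \<longlongrightarrow> c) at_top \<Longrightarrow> liminf_at_top_ge X c"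
  unfolding liminf_at_top_ge_def using order_tendstoD(1) by blast

lemma liminf_at_top_ge_add:
  assumes "liminf_at_top_ge X c" "liminf_at_top_ge Y d"
  shows "liminf_at_top_ge (\<lambda>s. X s + Y s) (c + d)"
  unfolding liminf_at_top_ge_def
proof safe
  fix y assume "y < c + d"
  then have "\<forall>\<^sub>F s in at_top. c - (c + d - y) / 2 < X s" "\<forall>\<^sub>F s in at_top. d - (c + d - y) / 2 < Y s"
    using assms unfolding liminf_at_top_ge_def by auto
  then show "\<forall>\<^sub>F s in at_top. y < X s + Y s"
    by eventually_elim (simp add: field_simps)
qed

lemma liminf_at_top_ge_cmult:
  assumes "liminf_at_top_ge X c" "k \<ge> 0"
  shows "liminf_at_top_ge (\<lambda>s. k * X s) (k * c)"
  unfolding liminf_at_top_ge_def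
proof safe
  fix y assume y: "y < k * c"
  show "\<forall>\<^sub>F s in at_top. y < k * X s"
  proof (cases "k = 0")
    case False
    with assms(2) have "k > 0"
      by simp
    with y have "y / k < c"
      by (simp add: field_simps)
    with assms(1) have "\<forall>\<^sub>F s in at_top. y / k < X s"
      unfolding liminf_at_top_ge_def by blast
    then show ?thesis
      by eventually_elim (use \<open>k > 0\<close> in \<open>simp add: field_simps\<close>)
  qed (use y in simp)
qed

lemma liminf_at_top_ge_shift:
  assumes "liminf_at_top_ge X c" "((\<lambda>s. Y s - X s) \<longlongrightarrow> d) at_top"
  shows "liminf_at_top_ge Y (c + d)"
  using liminf_at_top_ge_add[OF assms(1) tendsto_imp_liminf_at_top_ge[OF assms(2)]] by simp

definition lower_LD_ge :: "(real \<Rightarrow> real) \<Rightarrow> real \<Rightarrow> real \<Rightarrow> real \<Rightarrow> real \<Rightarrow> real \<Rightarrow> bool" where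
  "lower_LD_ge U c d x \<delta> v \<longleftrightarrow> admissible_delta c d x \<delta> \<and>
     (x < d \<longrightarrow> liminf_at_top_ge (LDr1 U x \<delta>) v) \<and> (c < x \<longrightarrow> liminf_at_top_ge (LDl1 U x \<delta>) v)"

lemma laplace_major_iff:
  "laplace_major h c d U \<longleftrightarrow> continuous_on {c..d} U \<and> (\<forall>x\<in>{c..d}. \<exists>\<delta>. lower_LD_ge U c d x \<delta> (h x))"
proof -
  have "ereal (h x) \<le> lowLD U c d \<delta> x \<and> lowLD U c d \<delta> x > -\<infinity> \<longleftrightarrow>
      (x < d \<longrightarrow> liminf_at_top_ge (LDr1 U x \<delta>) (h x)) \<and> (c < x \<longrightarrow> liminf_at_top_ge (LDl1 U x \<delta>) (h x))"
    for x \<delta>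
    unfolding lowLD_def Liminf_at_top_ge_iff[symmetric]
    by (auto intro: less_le_trans[of "-\<infinity>" "ereal (h x)"])
  then show ?thesis
    unfolding laplace_major_def lower_LD_ge_def by blast
qed

lemma LDr1_uminus: "LDr1 (\<lambda>y. - U y) x \<delta> = (\<lambda>s. - LDr1 U x \<delta> s)"
  using laplace_quotient_uminus[of "\<lambda>t. U (x + t) - U x"]
  by (simp add: fun_eq_iff LDr1_eq_laplace_quotient)

lemma LDl1_uminus: "LDl1 (\<lambda>y. - U y) x \<delta> = (\<lambda>s. - LDl1 U x \<delta> s)"
  using laplace_quotient_uminus[of "\<lambda>t. U (x - t) - U x"]
  by (simp add: fun_eq_iff LDl1_eq_laplace_quotient)

lemma laplace_minor_iff_major_uminus:
  "laplace_minor h c d V \<longleftrightarrow> laplace_major (\<lambda>x. - h x) c d (\<lambda>y. - V y)"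
proof -
  have "upLD V c d \<delta> x \<le> ereal (h x) \<and> upLD V c d \<delta> x < \<infinity> \<longleftrightarrow>
      (x < d \<longrightarrow> liminf_at_top_ge (LDr1 (\<lambda>y. - V y) x \<delta>) (- h x)) \<and>
      (c < x \<longrightarrow> liminf_at_top_ge (LDl1 (\<lambda>y. - V y) x \<delta>) (- h x))" for x \<delta>
    unfolding upLD_def LDr1_uminus LDl1_uminus Limsup_at_top_le_iff[symmetric]
    by (auto simp: max_def)
  moreover have "continuous_on {c..d} (\<lambda>y. - V y) \<longleftrightarrow> continuous_on {c..d} V"
    using continuous_on_minus[of "{c..d}" V] continuous_on_minus[of "{c..d}" "\<lambda>y. - V y"] by auto
  ultimately show ?thesis
    unfolding laplace_minor_def laplace_major_iff lower_LD_ge_def by auto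
qed

lemma continuous_on_right_difference:
  fixes U :: "real \<Rightarrow> real"
  assumes "continuous_on {c..d} U" "c \<le> x" "x + \<delta> \<le> d"
  shows "continuous_on {0..\<delta>} (\<lambda>t. U (x + t) - U x)"
proof -
  have "continuous_on {0..\<delta>} (\<lambda>t. U (x + t))"
    by (rule continuous_on_compose2[OF assms(1), of _ "\<lambda>t. x + t"])
      (use assms in \<open>auto simp: continuous_on_add\<close>)
  then show ?thesis
    by (intro continuous_intros)
qed

lemma continuous_on_left_difference:
  fixes U :: "real \<Rightarrow> real"
  assumes "continuous_on {c..d} U" "c \<le> x - \<delta>" "x \<le> d"
  shows "continuous_on {0..\<delta>} (\<lambda>t. U (x - t) - U x)"
proof -
  have "continuous_on {0..\<delta>} (\<lambda>t. U (x - t))"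
    by (rule continuous_on_compose2[OF assms(1), of _ "\<lambda>t. x - t"])
      (use assms in \<open>auto simp: continuous_on_diff\<close>)
  then show ?thesis
    by (intro continuous_intros)
qed

lemma lower_LD_ge_shrink:
  assumes U: "lower_LD_ge U c d x \<delta> v" and cont: "continuous_on {c..d} U"
    and sub: "c \<le> c'" "d' \<le> d" "x \<in> {c'..d'}" and \<delta>': "\<delta>' \<le> \<delta>" "admissible_delta c' d' x \<delta>'"
  shows "lower_LD_ge U c' d' x \<delta>' v"
proof -
  have "\<delta>' > 0"
    using \<delta>' unfolding admissible_delta_def by simp
  have "liminf_at_top_ge (LDr1 U x \<delta>') v" if "x < d'"
  proof -
    have "x + \<delta> \<le> d" and lim: "liminf_at_top_ge (LDr1 U x \<delta>) v"
      using U that sub unfolding lower_LD_ge_def admissible_delta_def by auto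
    then have "continuous_on {0..\<delta>} (\<lambda>t. U (x + t) - U x)"
      using sub by (intro continuous_on_right_difference[OF cont]) auto
    from tendsto_minus[OF laplace_quotient_window[OF this \<open>\<delta>' > 0\<close> \<delta>'(1)]]
    have "((\<lambda>s. LDr1 U x \<delta>' s - LDr1 U x \<delta> s) \<longlongrightarrow> 0) at_top"
      by (simp add: LDr1_eq_laplace_quotient)
    from liminf_at_top_ge_shift[OF lim this] show ?thesis
      by simp
  qed
  moreover have "liminf_at_top_ge (LDl1 U x \<delta>') v" if "c' < x"
  proof -
    have "c \<le> x - \<delta>" and lim: "liminf_at_top_ge (LDl1 U x \<delta>) v"
      using U that sub unfolding lower_LD_ge_def admissible_delta_def by auto
    then have "continuous_on {0..\<delta>} (\<lambda>t. U (x - t) - U x)"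
      using sub by (intro continuous_on_left_difference[OF cont]) auto
    from laplace_quotient_window[OF this \<open>\<delta>' > 0\<close> \<delta>'(1)]
    have "((\<lambda>s. LDl1 U x \<delta>' s - LDl1 U x \<delta> s) \<longlongrightarrow> 0) at_top"
      by (simp add: LDl1_eq_laplace_quotient)
    from liminf_at_top_ge_shift[OF lim this] show ?thesis
      by simp
  qed
  ultimately show ?thesis
    using \<delta>' unfolding lower_LD_ge_def by blast
qed

lemma laplace_major_restrict:
  assumes U: "laplace_major h c d U" and "c \<le> c'" "d' \<le> d"
  shows "laplace_major h c' d' U"
proof -
  have cont: "continuous_on {c..d} U"
    using U laplace_major_iff by blast
  have "\<exists>\<delta>'. lower_LD_ge U c' d' x \<delta>' (h x)" if x: "x \<in> {c'..d'}" for x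
  proof -
    have "x \<in> {c..d}"
      using x assms(2,3) by auto
    then obtain \<delta> where \<delta>: "lower_LD_ge U c d x \<delta> (h x)"
      using U unfolding laplace_major_iff by blast
    define \<delta>' where "\<delta>' = min \<delta> (min (if x < d' then d' - x else \<delta>) (if c' < x then x - c' else \<delta>))"
    have "\<delta>' \<le> \<delta>" "admissible_delta c' d' x \<delta>'"
      using \<delta> unfolding \<delta>'_def lower_LD_ge_def admissible_delta_def by auto
    with lower_LD_ge_shrink[OF \<delta> cont assms(2,3) x] show ?thesis
      by blast
  qed
  moreover have "continuous_on {c'..d'} U"
    by (rule continuous_on_subset[OF cont]) (use assms in auto)
  ultimately show ?thesis
    unfolding laplace_major_iff by blast
qed

lemma laplace_minor_restrict:
  "laplace_minor h c d V \<Longrightarrow> c \<le> c' \<Longrightarrow> d' \<le> d \<Longrightarrow> laplace_minor h c' d' V"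
  unfolding laplace_minor_iff_major_uminus by (rule laplace_major_restrict)

lemma laplace_major_add:
  assumes U1: "laplace_major h1 c d U1" and U2: "laplace_major h2 c d U2"
  shows "laplace_major (\<lambda>x. h1 x + h2 x) c d (\<lambda>y. U1 y + U2 y)"
proof -
  have cont: "continuous_on {c..d} U1" "continuous_on {c..d} U2"
    using assms laplace_major_iff by blast+
  have "\<exists>\<delta>. lower_LD_ge (\<lambda>y. U1 y + U2 y) c d x \<delta> (h1 x + h2 x)" if x: "x \<in> {c..d}" for x
  proof -
    obtain \<delta>1 \<delta>2 where \<delta>12: "lower_LD_ge U1 c d x \<delta>1 (h1 x)" "lower_LD_ge U2 c d x \<delta>2 (h2 x)"
      using assms x unfolding laplace_major_iff by meson
    define \<delta> where "\<delta> = min \<delta>1 \<delta>2"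
    have adm: "admissible_delta c d x \<delta>"
      using \<delta>12 unfolding lower_LD_ge_def admissible_delta_def \<delta>_def by auto
    have "lower_LD_ge U1 c d x \<delta> (h1 x)" "lower_LD_ge U2 c d x \<delta> (h2 x)"
      by (rule lower_LD_ge_shrink[OF \<delta>12(1) cont(1) _ _ x _ adm] lower_LD_ge_shrink[OF \<delta>12(2) cont(2) _ _ x _ adm];
          simp add: \<delta>_def)+
    moreover have "LDr1 (\<lambda>y. U1 y + U2 y) x \<delta> = (\<lambda>s. LDr1 U1 x \<delta> s + LDr1 U2 x \<delta> s)" if "x < d"
    proof -
      have "x + \<delta> \<le> d"
        using adm that unfolding admissible_delta_def by simp
      with x have "continuous_on {0..\<delta>} (\<lambda>t. U1 (x + t) - U1 x)" "continuous_on {0..\<delta>} (\<lambda>t. U2 (x + t) - U2 x)"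
        by (auto intro: continuous_on_right_difference[OF cont(1)] continuous_on_right_difference[OF cont(2)])
      from laplace_quotient_add[OF this, of 1] show ?thesis
        by (simp add: fun_eq_iff LDr1_eq_laplace_quotient algebra_simps)
    qed
    moreover have "LDl1 (\<lambda>y. U1 y + U2 y) x \<delta> = (\<lambda>s. LDl1 U1 x \<delta> s + LDl1 U2 x \<delta> s)" if "c < x"
    proof -
      have "c \<le> x - \<delta>"
        using adm that unfolding admissible_delta_def by simp
      with x have "continuous_on {0..\<delta>} (\<lambda>t. U1 (x - t) - U1 x)" "continuous_on {0..\<delta>} (\<lambda>t. U2 (x - t) - U2 x)"
        by (auto intro: continuous_on_left_difference[OF cont(1)] continuous_on_left_difference[OF cont(2)])
      from laplace_quotient_add[OF this, of 1] show ?thesis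
        by (simp add: fun_eq_iff LDl1_eq_laplace_quotient algebra_simps)
    qed
    ultimately have "lower_LD_ge (\<lambda>y. U1 y + U2 y) c d x \<delta> (h1 x + h2 x)"
      using adm unfolding lower_LD_ge_def by (auto intro: liminf_at_top_ge_add)
    then show ?thesis
      by blast
  qed
  with cont show ?thesis
    unfolding laplace_major_iff by (auto intro: continuous_on_add)
qed

lemma LDr1_nonpos_at_max:
  fixes V :: "real \<Rightarrow> real"
  assumes "continuous_on {c..d} V" "p \<in> {c..d}" "\<forall>y\<in>{c..d}. V y \<le> V p" "p + \<delta> \<le> d"
  shows "LDr1 V p \<delta> s \<le> 0"
  unfolding LDr1_eq_laplace_quotient
proof (rule laplace_quotient_nonpos)
  show "continuous_on {0..\<delta>} (\<lambda>t. V (p + t) - V p)"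
    using assms by (intro continuous_on_right_difference[OF assms(1)]) auto
  show "V (p + t) - V p \<le> 0" if "t \<in> {0..\<delta>}" for t
    using assms that by auto
qed

lemma laplace_major_zero_le:
  assumes W: "laplace_major (\<lambda>_. 0) c d W" and "c \<le> d"
  shows "W c \<le> W d"
proof (rule ccontr)
  txt \<open>Otherwise \<open>V t = W t + \<epsilon> t\<close> attains its maximum at some \<open>p < d\<close>; there its right
    Laplace quotients are \<open>\<le> 0\<close>, yet their lower limit is at least \<open>\<epsilon>\<close>.\<close>
  assume "\<not> W c \<le> W d"
  with \<open>c \<le> d\<close> have lt: "W d < W c" and "c < d"
    by (auto simp: order.order_iff_strict)
  define \<epsilon> where "\<epsilon> = (W c - W d) / (2 * (d - c))"
  define V where "V t = W t + \<epsilon> * t" for t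
  have "\<epsilon> > 0" and "\<epsilon> * (d - c) = (W c - W d) / 2"
    using lt \<open>c < d\<close> unfolding \<epsilon>_def by (simp_all add: field_simps)
  then have "V d < V c"
    using lt unfolding V_def by (simp add: algebra_simps)
  have cont: "continuous_on {c..d} W"
    using W laplace_major_iff by blast
  then have cont_V: "continuous_on {c..d} V"
    unfolding V_def by (intro continuous_intros)
  then obtain p where p: "p \<in> {c..d}" "\<forall>y\<in>{c..d}. V y \<le> V p"
    using continuous_attains_sup[OF compact_Icc _ cont_V] \<open>c \<le> d\<close> by auto
  with \<open>V d < V c\<close> \<open>c \<le> d\<close> have "p < d"
    by (metis atLeastAtMost_iff leD order.order_iff_strict order_refl)
  obtain \<delta> where "lower_LD_ge W c d p \<delta> 0"
    using W p unfolding laplace_major_iff by blast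
  with \<open>p < d\<close> have "\<delta> > 0" "p + \<delta> \<le> d" and lim: "liminf_at_top_ge (LDr1 W p \<delta>) 0"
    unfolding lower_LD_ge_def admissible_delta_def by auto
  have cont_p: "continuous_on {0..\<delta>} (\<lambda>t. W (p + t) - W p)"
    using p \<open>p + \<delta> \<le> d\<close> by (intro continuous_on_right_difference[OF cont]) auto
  have "LDr1 V p \<delta> s = LDr1 W p \<delta> s + \<epsilon> * laplace_quotient (\<lambda>t. t) \<delta> s" for s
    using laplace_quotient_add[OF cont_p continuous_on_id, of \<epsilon> s]
    unfolding LDr1_eq_laplace_quotient V_def by (simp add: algebra_simps)
  then have "((\<lambda>s. LDr1 V p \<delta> s - LDr1 W p \<delta> s) \<longlongrightarrow> \<epsilon> * 1) at_top"
    using tendsto_mult_left[OF laplace_quotient_ident_tendsto_1[OF \<open>\<delta> > 0\<close>]] by simp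
  from liminf_at_top_ge_shift[OF lim this] \<open>\<epsilon> > 0\<close>
  have "\<forall>\<^sub>F s in at_top. 0 < LDr1 V p \<delta> s"
    unfolding liminf_at_top_ge_def by simp
  moreover have "LDr1 V p \<delta> s \<le> 0" for s
    using LDr1_nonpos_at_max[OF cont_V p \<open>p + \<delta> \<le> d\<close>] .
  ultimately have "\<forall>\<^sub>F s :: real in at_top. False"
    by (auto elim: eventually_mono simp: not_less[symmetric])
  then show False
    by simp
qed

lemma laplace_minor_le_major:
  assumes "laplace_major h c d U" "laplace_minor h c d V" "c \<le> d"
  shows "V d - V c \<le> U d - U c"
proof -
  have "laplace_major (\<lambda>x. h x + - h x) c d (\<lambda>y. U y + - V y)"
    using laplace_major_add assms(1,2) unfolding laplace_minor_iff_major_uminus by blast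
  then have "laplace_major (\<lambda>_. 0) c d (\<lambda>y. U y - V y)"
    by simp
  from laplace_major_zero_le[OF this assms(3)] show ?thesis
    by simp
qed

section \<open>The Laplace integral\<close>

lemma laplace_integral_bounds:
  assumes I: "laplace_integrable h c d" and U: "laplace_major h c d U" and V: "laplace_minor h c d V"
  shows "V d - V c \<le> laplace_integral h c d" "laplace_integral h c d \<le> U d - U c"
proof -
  obtain r where up: "laplace_upper_int h c d = ereal r" and lo: "laplace_lower_int h c d = ereal r"
    using I unfolding laplace_integrable_def by (cases "laplace_upper_int h c d") auto
  have "ereal r \<le> ereal (U d - U c)"
    unfolding up[symmetric] laplace_upper_int_def by (rule INF_lower) (use U in simp)
  moreover have "ereal (V d - V c) \<le> ereal r"
    unfolding lo[symmetric] laplace_lower_int_def by (rule SUP_upper) (use V in simp)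
  ultimately show "V d - V c \<le> laplace_integral h c d" "laplace_integral h c d \<le> U d - U c"
    unfolding laplace_integral_def up by simp_all
qed

lemma laplace_integrableI_squeeze:
  assumes "c \<le> d"
    and approx: "\<And>\<epsilon>. \<epsilon> > 0 \<Longrightarrow> \<exists>U V. laplace_major h c d U \<and> laplace_minor h c d V \<and>
                   U d - U c \<le> I + \<epsilon> \<and> I - \<epsilon> \<le> V d - V c"
  shows "laplace_integrable h c d \<and> laplace_integral h c d = I"
proof -
  have "laplace_upper_int h c d \<le> ereal I"
  proof (rule ereal_le_epsilon2)
    fix \<epsilon> :: real assume "\<epsilon> > 0"
    then obtain U where "laplace_major h c d U" "U d - U c \<le> I + \<epsilon>"
      using approx by blast
    then have "laplace_upper_int h c d \<le> ereal (I + \<epsilon>)"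
      unfolding laplace_upper_int_def by (intro INF_lower2[of U]) auto
    then show "laplace_upper_int h c d \<le> ereal I + ereal \<epsilon>"
      by simp
  qed
  moreover have "ereal I \<le> laplace_lower_int h c d"
  proof (rule ereal_le_epsilon2)
    fix \<epsilon> :: real assume "\<epsilon> > 0"
    then obtain V where "laplace_minor h c d V" "I - \<epsilon> \<le> V d - V c"
      using approx by blast
    then have "ereal (I - \<epsilon>) \<le> laplace_lower_int h c d"
      unfolding laplace_lower_int_def by (intro SUP_upper2[of V]) auto
    then have "ereal (I - \<epsilon>) + ereal \<epsilon> \<le> laplace_lower_int h c d + ereal \<epsilon>"
      by (rule add_right_mono)
    then show "ereal I \<le> laplace_lower_int h c d + ereal \<epsilon>"
      by simp
  qed
  moreover have "laplace_lower_int h c d \<le> laplace_upper_int h c d"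
    unfolding laplace_lower_int_def laplace_upper_int_def
    by (intro SUP_least INF_greatest) (simp add: laplace_minor_le_major \<open>c \<le> d\<close>)
  ultimately have "laplace_lower_int h c d = ereal I" "laplace_upper_int h c d = ereal I"
    by (auto intro: order.antisym order.trans)
  then show ?thesis
    unfolding laplace_integrable_def laplace_integral_def by simp
qed

lemma laplace_primitive_approx:
  assumes "a \<le> x" and prim: "\<forall>y\<in>{a..x}. laplace_integrable g a y \<and> G y - G a = laplace_integral g a y"
    and "\<epsilon> > 0"
  obtains U V where "laplace_major g a x U" "laplace_minor g a x V"
    "\<forall>y\<in>{a..x}. \<bar>(U y - U a) - (G y - G a)\<bar> \<le> \<epsilon> \<and> \<bar>(V y - V a) - (G y - G a)\<bar> \<le> \<epsilon>"
proof -
  have "laplace_integrable g a x"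
    using prim \<open>a \<le> x\<close> by auto
  then obtain r where up: "laplace_upper_int g a x = ereal r" and lo: "laplace_lower_int g a x = ereal r"
    unfolding laplace_integrable_def by (cases "laplace_upper_int g a x") auto
  have "laplace_upper_int g a x < ereal (r + \<epsilon> / 2)"
    using up \<open>\<epsilon> > 0\<close> by simp
  then obtain U where U: "laplace_major g a x U" "U x - U a < r + \<epsilon> / 2"
    unfolding laplace_upper_int_def INF_less_iff by auto
  have "ereal (r - \<epsilon> / 2) < laplace_lower_int g a x"
    using lo \<open>\<epsilon> > 0\<close> by simp
  then obtain V where V: "laplace_minor g a x V" "r - \<epsilon> / 2 < V x - V a"
    unfolding laplace_lower_int_def less_SUP_iff by auto
  have "\<bar>(U y - U a) - (G y - G a)\<bar> \<le> \<epsilon> \<and> \<bar>(V y - V a) - (G y - G a)\<bar> \<le> \<epsilon>" if y: "y \<in> {a..x}" for y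
  proof -
    have "V y - V a \<le> G y - G a" "G y - G a \<le> U y - U a"
      using prim y laplace_integral_bounds[of g a y U V]
        laplace_major_restrict[OF U(1), of a y] laplace_minor_restrict[OF V(1), of a y] by auto
    moreover have "V x - V y \<le> U x - U y"
      using y laplace_minor_le_major[OF laplace_major_restrict[OF U(1)] laplace_minor_restrict[OF V(1)]]
      by auto
    ultimately show ?thesis
      using U(2) V(2) by linarith
  qed
  with U(1) V(1) show ?thesis
    using that by blast
qed

section \<open>Integration by parts\<close>

text \<open>The Stieltjes integral \<open>\<integral>\<^sub>a\<^sup>y w d\<Phi>\<close> for a weight \<open>w\<close> with derivative \<open>w'\<close>,
  written through integration by parts.\<close>

definition parts_integral :: "(real \<Rightarrow> real) \<Rightarrow> (real \<Rightarrow> real) \<Rightarrow> (real \<Rightarrow> real) \<Rightarrow> real \<Rightarrow> real \<Rightarrow> real" where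
  "parts_integral w w' \<Phi> a y = \<Phi> y * w y - \<Phi> a * w a - integral {a..y} (\<lambda>\<sigma>. \<Phi> \<sigma> * w' \<sigma>)"

lemma parts_integral_tangent:
  assumes w: "\<forall>t\<in>{c..d}. (w has_real_derivative w' t) (at t within {c..d})" "continuous_on {c..d} w'"
    and U: "continuous_on {c..d} U" and t: "t \<in> {c..d}"
  shows "((\<lambda>y. parts_integral w w' U c y - w t * U y) has_real_derivative 0) (at t within {c..d})"
proof -
  obtain q where q: "\<forall>y. w y - w t = q y * (y - t)" "continuous (at t within {c..d}) q"
    using w(1) t DERIV_caratheodory_within by blast
  txt \<open>The product is \<open>o(y - t)\<close> by continuity of \<open>U\<close> alone; \<open>U\<close> need not be differentiable.\<close>
  have "continuous (at t within {c..d}) U"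
    using U t by (simp add: continuous_on_eq_continuous_within)
  then have prod: "((\<lambda>y. (U y - U t) * (w y - w t)) has_real_derivative 0) (at t within {c..d})"
    unfolding DERIV_caratheodory_within
    by (intro exI[of _ "\<lambda>y. (U y - U t) * q y"]) (auto intro!: continuous_mult continuous_diff q(2) simp: q(1))
  have "((\<lambda>y. U t * w y - integral {c..y} (\<lambda>\<sigma>. U \<sigma> * w' \<sigma>)) has_real_derivative U t * w' t - U t * w' t)
      (at t within {c..d})"
    using w t by (intro DERIV_diff DERIV_cmult integral_has_real_derivative continuous_intros U) auto
  from DERIV_diff[OF DERIV_add[OF prod this] DERIV_const[of "U c * w c + U t * w t"]]
  have "((\<lambda>y. (U y - U t) * (w y - w t) + (U t * w y - integral {c..y} (\<lambda>\<sigma>. U \<sigma> * w' \<sigma>))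
      - (U c * w c + U t * w t)) has_real_derivative 0) (at t within {c..d})"
    by simp
  moreover have "(\<lambda>y. parts_integral w w' U c y - w t * U y) = (\<lambda>y. (U y - U t) * (w y - w t)
      + (U t * w y - integral {c..y} (\<lambda>\<sigma>. U \<sigma> * w' \<sigma>)) - (U c * w c + U t * w t))"
    by (simp add: fun_eq_iff parts_integral_def algebra_simps)
  ultimately show ?thesis
    by simp
qed

lemma laplace_quotient_flat_tendsto_0:
  fixes D :: "real \<Rightarrow> real"
  assumes cont: "continuous_on {c..d} D" and flat: "(D has_real_derivative 0) (at x within {c..d})"
    and "\<delta> > 0" and sub: "(\<lambda>\<tau>. x + \<sigma> * \<tau>) ` {0..\<delta>} \<subseteq> {c..d}"
  shows "(laplace_quotient (\<lambda>\<tau>. D (x + \<sigma> * \<tau>) - D x) \<delta> \<longlongrightarrow> 0) at_top"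
proof (rule laplace_quotient_tendsto_derivative[OF _ \<open>\<delta> > 0\<close>])
  have "continuous_on {0..\<delta>} (\<lambda>\<tau>. D (x + \<sigma> * \<tau>))"
    by (rule continuous_on_compose2[OF cont _ sub]) (intro continuous_intros)
  then show "continuous_on {0..\<delta>} (\<lambda>\<tau>. D (x + \<sigma> * \<tau>) - D x)"
    by (intro continuous_intros)
  have "(D has_real_derivative 0) (at ((\<lambda>\<tau>. x + \<sigma> * \<tau>) 0) within (\<lambda>\<tau>. x + \<sigma> * \<tau>) ` {0..\<delta>})"
    using has_field_derivative_subset[OF flat sub] by simp
  moreover have "((\<lambda>\<tau>. x + \<sigma> * \<tau>) has_real_derivative \<sigma>) (at 0 within {0..\<delta>})"
    by (auto intro!: derivative_eq_intros)
  ultimately have "(D \<circ> (\<lambda>\<tau>. x + \<sigma> * \<tau>) has_real_derivative 0 * \<sigma>) (at 0 within {0..\<delta>})"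
    by (rule DERIV_image_chain)
  from DERIV_diff[OF this DERIV_const[of "D x"]]
  show "((\<lambda>\<tau>. D (x + \<sigma> * \<tau>) - D x) has_real_derivative 0) (at 0 within {0..\<delta>})"
    by (simp add: o_def)
qed simp

lemma lower_LD_ge_tangent:
  assumes U: "continuous_on {c..d} U" and W: "continuous_on {c..d} W" and x: "x \<in> {c..d}" and "k \<ge> 0"
    and tangent: "((\<lambda>y. W y - k * U y) has_real_derivative 0) (at x within {c..d})"
    and LD: "lower_LD_ge U c d x \<delta> v"
  shows "lower_LD_ge W c d x \<delta> (k * v)"
proof -
  define D where "D = (\<lambda>y. W y - k * U y)"
  have cont_D: "continuous_on {c..d} D"
    unfolding D_def by (intro continuous_intros U W)
  note flat = laplace_quotient_flat_tendsto_0[OF cont_D tangent[folded D_def]]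
  have adm: "admissible_delta c d x \<delta>" and "\<delta> > 0"
    using LD unfolding lower_LD_ge_def admissible_delta_def by auto
  have "liminf_at_top_ge (LDr1 W x \<delta>) (k * v)" if "x < d"
  proof -
    have "x + \<delta> \<le> d" and lim: "liminf_at_top_ge (LDr1 U x \<delta>) v"
      using LD that unfolding lower_LD_ge_def admissible_delta_def by auto
    with x have cont: "continuous_on {0..\<delta>} (\<lambda>t. W (x + t) - W x)" "continuous_on {0..\<delta>} (\<lambda>t. U (x + t) - U x)"
      by (auto intro: continuous_on_right_difference[OF W] continuous_on_right_difference[OF U])
    have "laplace_quotient (\<lambda>\<tau>. D (x + 1 * \<tau>) - D x) \<delta> = (\<lambda>s. LDr1 W x \<delta> s - k * LDr1 U x \<delta> s)"
      using laplace_quotient_add[OF cont, of "- k"]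
      by (simp add: fun_eq_iff LDr1_eq_laplace_quotient D_def algebra_simps)
    with flat[OF \<open>\<delta> > 0\<close>, of 1] x \<open>x + \<delta> \<le> d\<close>
    have "((\<lambda>s. LDr1 W x \<delta> s - k * LDr1 U x \<delta> s) \<longlongrightarrow> 0) at_top"
      by auto
    from liminf_at_top_ge_shift[OF liminf_at_top_ge_cmult[OF lim \<open>k \<ge> 0\<close>] this] show ?thesis
      by simp
  qed
  moreover have "liminf_at_top_ge (LDl1 W x \<delta>) (k * v)" if "c < x"
  proof -
    have "c \<le> x - \<delta>" and lim: "liminf_at_top_ge (LDl1 U x \<delta>) v"
      using LD that unfolding lower_LD_ge_def admissible_delta_def by auto
    with x have cont: "continuous_on {0..\<delta>} (\<lambda>t. W (x - t) - W x)" "continuous_on {0..\<delta>} (\<lambda>t. U (x - t) - U x)"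
      by (auto intro: continuous_on_left_difference[OF W] continuous_on_left_difference[OF U])
    have "laplace_quotient (\<lambda>\<tau>. D (x + - 1 * \<tau>) - D x) \<delta> = (\<lambda>s. - (LDl1 W x \<delta> s - k * LDl1 U x \<delta> s))"
      using laplace_quotient_add[OF cont, of "- k"]
      by (simp add: fun_eq_iff LDl1_eq_laplace_quotient D_def algebra_simps)
    with tendsto_minus[OF flat[OF \<open>\<delta> > 0\<close>, of "- 1"]] x \<open>c \<le> x - \<delta>\<close>
    have "((\<lambda>s. LDl1 W x \<delta> s - k * LDl1 U x \<delta> s) \<longlongrightarrow> 0) at_top"
      by auto
    from liminf_at_top_ge_shift[OF liminf_at_top_ge_cmult[OF lim \<open>k \<ge> 0\<close>] this] show ?thesis
      by simp
  qed
  ultimately show ?thesis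
    using adm unfolding lower_LD_ge_def by blast
qed

lemma laplace_major_parts_integral:
  assumes U: "laplace_major g c d U"
    and w: "\<forall>t\<in>{c..d}. (w has_real_derivative w' t) (at t within {c..d})" "continuous_on {c..d} w'"
      "\<forall>t\<in>{c..d}. 0 \<le> w t"
  shows "laplace_major (\<lambda>t. g t * w t) c d (parts_integral w w' U c)"
proof -
  have cont_U: "continuous_on {c..d} U"
    using U laplace_major_iff by blast
  have "continuous_on {c..d} w"
    using DERIV_continuous_on w(1) by blast
  then have cont: "continuous_on {c..d} (parts_integral w w' U c)"
    unfolding parts_integral_def
    by (intro continuous_intros indefinite_integral_continuous_1 integrable_continuous_real cont_U w(2))
  have "\<exists>\<delta>. lower_LD_ge (parts_integral w w' U c) c d x \<delta> (g x * w x)" if x: "x \<in> {c..d}" for x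
  proof -
    obtain \<delta> where "lower_LD_ge U c d x \<delta> (g x)"
      using U x unfolding laplace_major_iff by blast
    from lower_LD_ge_tangent[OF cont_U cont x _ parts_integral_tangent[OF w(1,2) cont_U x] this] w(3) x
    show ?thesis
      by (auto simp: mult.commute)
  qed
  with cont show ?thesis
    unfolding laplace_major_iff by blast
qed

lemma parts_integral_uminus: "parts_integral w w' (\<lambda>y. - \<Phi> y) a = (\<lambda>y. - parts_integral w w' \<Phi> a y)"
  by (simp add: fun_eq_iff parts_integral_def)

lemma laplace_minor_parts_integral:
  assumes "laplace_minor g c d V"
    and "\<forall>t\<in>{c..d}. (w has_real_derivative w' t) (at t within {c..d})" "continuous_on {c..d} w'"
      "\<forall>t\<in>{c..d}. 0 \<le> w t"
  shows "laplace_minor (\<lambda>t. g t * w t) c d (parts_integral w w' V c)"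
  using laplace_major_parts_integral[of "\<lambda>t. - g t" c d "\<lambda>y. - V y" w w'] assms
  unfolding laplace_minor_iff_major_uminus parts_integral_uminus by simp

lemma parts_integral_diff:
  assumes "continuous_on {a..x} \<Phi>" "continuous_on {a..x} \<Psi>" "continuous_on {a..x} w'"
  shows "parts_integral w w' \<Phi> a x - parts_integral w w' \<Psi> a x = parts_integral w w' (\<lambda>\<sigma>. \<Phi> \<sigma> - \<Psi> \<sigma>) a x"
proof -
  have "(\<lambda>\<sigma>. \<Phi> \<sigma> * w' \<sigma>) integrable_on {a..x}" "(\<lambda>\<sigma>. \<Psi> \<sigma> * w' \<sigma>) integrable_on {a..x}"
    by (intro integrable_continuous_real continuous_intros assms)+
  from integral_diff[OF this] show ?thesis
    unfolding parts_integral_def by (simp add: algebra_simps)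
qed

lemma abs_parts_integral_le:
  assumes "a \<le> x"
    and w: "\<forall>t\<in>{a..x}. (w has_real_derivative w' t) (at t within {a..x})" "continuous_on {a..x} w'"
      "\<forall>t\<in>{a..x}. 0 \<le> w t \<and> w' t \<le> 0"
    and \<Phi>: "continuous_on {a..x} \<Phi>" "\<forall>\<sigma>\<in>{a..x}. \<bar>\<Phi> \<sigma> - \<Phi> a\<bar> \<le> A"
  shows "\<bar>parts_integral w w' \<Phi> a x\<bar> \<le> A * w a"
proof -
  have "(w' has_integral w x - w a) {a..x}"
    using w(1) by (intro fundamental_theorem_of_calculus[OF \<open>a \<le> x\<close>])
      (simp add: has_real_derivative_iff_has_vector_derivative[symmetric])
  then have ftc: "integral {a..x} w' = w x - w a"
    by (rule integral_unique)
  have int: "(\<lambda>\<sigma>. \<Phi> \<sigma> * w' \<sigma>) integrable_on {a..x}" "(\<lambda>\<sigma>. \<Phi> a * w' \<sigma>) integrable_on {a..x}"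
    "(\<lambda>\<sigma>. A * - w' \<sigma>) integrable_on {a..x}"
    by (intro integrable_continuous_real continuous_intros w(2) \<Phi>(1))+
  have "parts_integral w w' \<Phi> a x = (\<Phi> x - \<Phi> a) * w x + integral {a..x} (\<lambda>\<sigma>. (\<Phi> \<sigma> - \<Phi> a) * - w' \<sigma>)"
    using integral_diff[OF int(2,1)] ftc unfolding parts_integral_def by (simp add: algebra_simps)
  moreover have "\<bar>(\<Phi> x - \<Phi> a) * w x\<bar> \<le> A * w x"
    using \<Phi>(2) w(3) \<open>a \<le> x\<close> by (simp add: abs_mult mult_right_mono)
  moreover have "norm (integral {a..x} (\<lambda>\<sigma>. (\<Phi> \<sigma> - \<Phi> a) * - w' \<sigma>)) \<le> integral {a..x} (\<lambda>\<sigma>. A * - w' \<sigma>)"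
  proof (rule integral_norm_bound_integral[OF _ int(3)])
    show "(\<lambda>\<sigma>. (\<Phi> \<sigma> - \<Phi> a) * - w' \<sigma>) integrable_on {a..x}"
      by (intro integrable_continuous_real continuous_intros w(2) \<Phi>(1))
    show "norm ((\<Phi> \<sigma> - \<Phi> a) * - w' \<sigma>) \<le> A * - w' \<sigma>" if "\<sigma> \<in> {a..x}" for \<sigma>
      using \<Phi>(2) w(3) that by (auto simp: abs_mult intro!: mult_right_mono_neg)
  qed
  moreover have "integral {a..x} (\<lambda>\<sigma>. A * - w' \<sigma>) = A * (w a - w x)"
    by (simp add: ftc right_diff_distrib)
  ultimately show ?thesis
    by (simp add: algebra_simps)
qed

lemma laplace_integral_by_parts:
  assumes "a \<le> x"
    and prim: "\<forall>y\<in>{a..x}. laplace_integrable g a y \<and> G y - G a = laplace_integral g a y"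
    and G: "continuous_on {a..x} G"
    and w: "\<forall>t\<in>{a..x}. (w has_real_derivative w' t) (at t within {a..x})" "continuous_on {a..x} w'"
      "\<forall>t\<in>{a..x}. 0 \<le> w t \<and> w' t \<le> 0"
  shows "laplace_integrable (\<lambda>t. g t * w t) a x \<and>
    laplace_integral (\<lambda>t. g t * w t) a x = parts_integral w w' G a x"
proof (rule laplace_integrableI_squeeze[OF \<open>a \<le> x\<close>])
  fix \<epsilon> :: real assume "\<epsilon> > 0"
  define \<eta> where "\<eta> = \<epsilon> / (w a + 1)"
  have "w a \<ge> 0"
    using w(3) \<open>a \<le> x\<close> by auto
  with \<open>\<epsilon> > 0\<close> have "\<eta> > 0" "\<eta> * w a \<le> \<epsilon>"
    unfolding \<eta>_def by (auto simp: field_simps)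
  obtain U V where U: "laplace_major g a x U" and V: "laplace_minor g a x V"
    and UV: "\<forall>y\<in>{a..x}. \<bar>(U y - U a) - (G y - G a)\<bar> \<le> \<eta> \<and> \<bar>(V y - V a) - (G y - G a)\<bar> \<le> \<eta>"
    using laplace_primitive_approx[OF \<open>a \<le> x\<close> prim \<open>\<eta> > 0\<close>] by blast
  have close: "\<bar>parts_integral w w' Z a x - parts_integral w w' G a x\<bar> \<le> \<epsilon>"
    if Z: "continuous_on {a..x} Z" "\<forall>y\<in>{a..x}. \<bar>(Z y - Z a) - (G y - G a)\<bar> \<le> \<eta>" for Z
  proof -
    have "\<bar>parts_integral w w' (\<lambda>\<sigma>. Z \<sigma> - G \<sigma>) a x\<bar> \<le> \<eta> * w a"
      using Z by (intro abs_parts_integral_le[OF \<open>a \<le> x\<close> w] continuous_intros G) (auto simp: algebra_simps)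
    with \<open>\<eta> * w a \<le> \<epsilon>\<close> show ?thesis
      using parts_integral_diff[OF Z(1) G w(2)] by simp
  qed
  have "continuous_on {a..x} U" "continuous_on {a..x} V"
    using U V unfolding laplace_major_iff laplace_minor_def by auto
  with UV have "parts_integral w w' U a x \<le> parts_integral w w' G a x + \<epsilon>"
    "parts_integral w w' G a x - \<epsilon> \<le> parts_integral w w' V a x"
    using close[of U] close[of V] by auto
  moreover have "parts_integral w w' Z a a = 0" for Z
    by (simp add: parts_integral_def)
  ultimately show "\<exists>U V. laplace_major (\<lambda>t. g t * w t) a x U \<and> laplace_minor (\<lambda>t. g t * w t) a x V \<and>
      U x - U a \<le> parts_integral w w' G a x + \<epsilon> \<and> parts_integral w w' G a x - \<epsilon> \<le> V x - V a"
    using laplace_major_parts_integral[OF U w(1,2)] laplace_minor_parts_integral[OF V w(1,2)] w(3)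
    by (intro exI[of _ "parts_integral w w' U a"] exI[of _ "parts_integral w w' V a"]) auto
qed

section \<open>Taylor's formula with Laplace integral remainder\<close>

lemma Taylor_parts_integral:
  fixes F :: "nat \<Rightarrow> real \<Rightarrow> real"
  assumes "a \<le> x" and F: "\<forall>k<n. \<forall>t\<in>{a..x}. (F k has_real_derivative F (Suc k) t) (at t within {a..x})"
  shows "fact n * (F 0 x - (\<Sum>k\<le>n. F k a / fact k * (x - a) ^ k)) =
    parts_integral (\<lambda>t. (x - t) ^ n) (\<lambda>t. - (real n * (x - t) ^ (n - 1))) (F n) a x"
proof (cases n)
  case 0
  then show ?thesis
    by (simp add: parts_integral_def)
next
  case (Suc m)
  have "\<And>k t. k < Suc m \<Longrightarrow> a \<le> t \<Longrightarrow> t \<le> x \<Longrightarrow>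
      (F k has_vector_derivative F (Suc k) t) (at t within {a..x})"
    using F Suc by (simp add: has_real_derivative_iff_has_vector_derivative[symmetric])
  from Taylor_integral[of "Suc m" F "F 0", OF _ refl this \<open>a \<le> x\<close>]
  have Taylor: "F 0 x = (\<Sum>k<Suc m. (x - a) ^ k / fact k * F k a)
      + integral {a..x} (\<lambda>t. (x - t) ^ m / fact m * F (Suc m) t)"
    by simp
  have "(\<lambda>t. F (Suc m) t * - (real (Suc m) * (x - t) ^ m)) = (\<lambda>t. - fact (Suc m) * ((x - t) ^ m / fact m * F (Suc m) t))"
    by (simp add: fun_eq_iff field_simps)
  then have "parts_integral (\<lambda>t. (x - t) ^ Suc m) (\<lambda>t. - (real (Suc m) * (x - t) ^ m)) (F (Suc m)) a x
      = fact (Suc m) * integral {a..x} (\<lambda>t. (x - t) ^ m / fact m * F (Suc m) t) - F (Suc m) a * (x - a) ^ Suc m"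
    unfolding parts_integral_def by simp
  moreover have "(\<Sum>k\<le>Suc m. F k a / fact k * (x - a) ^ k)
      = (\<Sum>k<Suc m. (x - a) ^ k / fact k * F k a) + F (Suc m) a / fact (Suc m) * (x - a) ^ Suc m"
    by (simp add: lessThan_Suc_atMost mult.commute)
  ultimately show ?thesis
    unfolding Suc using Taylor by (simp add: right_diff_distrib)
qed

lemma Taylor_Laplace_remainder:
  fixes F :: "nat \<Rightarrow> real \<Rightarrow> real"
  assumes "a \<le> x"
    and F: "\<forall>k<n. \<forall>t\<in>{a..x}. (F k has_real_derivative F (Suc k) t) (at t within {a..x})"
    and cont: "continuous_on {a..x} (F n)"
    and prim: "\<forall>y\<in>{a..x}. laplace_integrable g a y \<and> F n y - F n a = laplace_integral g a y"
    and norm: "\<forall>y\<in>{a..x}. \<bar>laplace_integral g a y\<bar> \<le> A"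
  shows "laplace_integrable (\<lambda>t. g t * (x - t) ^ n) a x \<and>
    F 0 x = (\<Sum>k\<le>n. F k a / fact k * (x - a) ^ k) + 1 / fact n * laplace_integral (\<lambda>t. g t * (x - t) ^ n) a x \<and>
    \<bar>1 / fact n * laplace_integral (\<lambda>t. g t * (x - t) ^ n) a x\<bar> \<le> (x - a) ^ n / fact n * A"
proof -
  have w: "\<forall>t\<in>{a..x}. ((\<lambda>t. (x - t) ^ n) has_real_derivative - (real n * (x - t) ^ (n - 1))) (at t within {a..x})"
      "continuous_on {a..x} (\<lambda>t. - (real n * (x - t) ^ (n - 1)))"
      "\<forall>t\<in>{a..x}. 0 \<le> (x - t) ^ n \<and> - (real n * (x - t) ^ (n - 1)) \<le> 0"
    by (auto intro!: derivative_eq_intros continuous_on_minus continuous_on_mult continuous_on_power continuous_on_diff)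
  note parts = laplace_integral_by_parts[OF \<open>a \<le> x\<close> prim cont w]
  have "\<forall>y\<in>{a..x}. \<bar>F n y - F n a\<bar> \<le> A"
    using prim norm by auto
  from abs_parts_integral_le[OF \<open>a \<le> x\<close> w cont this]
  have "\<bar>parts_integral (\<lambda>t. (x - t) ^ n) (\<lambda>t. - (real n * (x - t) ^ (n - 1))) (F n) a x\<bar> \<le> A * (x - a) ^ n" .
  with parts Taylor_parts_integral[OF \<open>a \<le> x\<close> F] show ?thesis
    by (auto simp: field_simps abs_mult)
qed

lemma abs_laplace_integral_le_alexiewicz_norm:
  assumes "continuous_on {a..b} G" "\<forall>y\<in>{a..b}. G y - G a = laplace_integral g a y" "y \<in> {a..b}"
  shows "\<bar>laplace_integral g a y\<bar> \<le> alexiewicz_norm g a b"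
proof -
  have "bdd_above ((\<lambda>y. \<bar>G y - G a\<bar>) ` {a..b})"
    using assms(1) by (intro bounded_imp_bdd_above compact_imp_bounded compact_continuous_image continuous_intros) auto
  moreover have "(\<lambda>y. \<bar>G y - G a\<bar>) ` {a..b} = (\<lambda>y. \<bar>laplace_integral g a y\<bar>) ` {a..b}"
    using assms(2) by (intro image_cong) auto
  ultimately show ?thesis
    unfolding alexiewicz_norm_def using assms(3) by (auto intro: cSUP_upper)
qed

theorem theorem9p1:
  fixes f :: "real \<Rightarrow> real" and F :: "nat \<Rightarrow> real \<Rightarrow> real"
    and g :: "real \<Rightarrow> real" and N :: "real set" and a b :: real and n :: nat
  assumes ab: "a < b"
    and F0: "\<forall>x\<in>{a..b}. F 0 x = f x"
    and Fder: "\<forall>k<n. \<forall>x\<in>{a..b}. (F k has_real_derivative F (Suc k) x) (at x within {a..b})"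
    and Fcont: "\<forall>k\<le>n. continuous_on {a..b} (F k)"
    and N: "N \<in> null_sets lebesgue"
    and LD: "\<forall>x\<in>{a..b} - N. has_LD F n a b x (g x)"
    and gint: "laplace_integrable g a b"
    and FTC: "\<forall>x\<in>{a..b}. laplace_integrable g a x \<and> F n x - F n a = laplace_integral g a x"
  shows "(\<forall>x\<in>{a..b}. laplace_integrable (\<lambda>t. g t * (x - t) ^ n) a x \<and>
            f x = (\<Sum>k\<le>n. F k a / fact k * (x - a) ^ k)
                  + 1 / fact n * laplace_integral (\<lambda>t. g t * (x - t) ^ n) a x) \<and>
         (SUP x\<in>{a..b}. \<bar>1 / fact n * laplace_integral (\<lambda>t. g t * (x - t) ^ n) a x\<bar>)
           \<le> (b - a) ^ n / fact n * alexiewicz_norm g a b"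
proof -
  let ?R = "\<lambda>x. 1 / fact n * laplace_integral (\<lambda>t. g t * (x - t) ^ n) a x"
  define A where "A = alexiewicz_norm g a b"
  have norm: "\<forall>y\<in>{a..b}. \<bar>laplace_integral g a y\<bar> \<le> A"
    using abs_laplace_integral_le_alexiewicz_norm[of a b "F n"] Fcont FTC unfolding A_def by auto
  have remainder: "laplace_integrable (\<lambda>t. g t * (x - t) ^ n) a x \<and>
      f x = (\<Sum>k\<le>n. F k a / fact k * (x - a) ^ k) + ?R x \<and> \<bar>?R x\<bar> \<le> (b - a) ^ n / fact n * A"
    if x: "x \<in> {a..b}" for x
  proof -
    have "\<forall>k<n. \<forall>t\<in>{a..x}. (F k has_real_derivative F (Suc k) t) (at t within {a..x})"
      using Fder x by (auto intro: DERIV_subset[of _ _ _ "{a..b}"])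
    with x Fcont FTC norm have "laplace_integrable (\<lambda>t. g t * (x - t) ^ n) a x \<and>
        F 0 x = (\<Sum>k\<le>n. F k a / fact k * (x - a) ^ k) + ?R x \<and> \<bar>?R x\<bar> \<le> (x - a) ^ n / fact n * A"
      by (intro Taylor_Laplace_remainder) (auto intro: continuous_on_subset)
    moreover have "(x - a) ^ n / fact n * A \<le> (b - a) ^ n / fact n * A"
      using x norm ab by (intro mult_right_mono divide_right_mono power_mono) force+
    ultimately show ?thesis
      using F0 x by auto
  qed
  then have "(SUP x\<in>{a..b}. \<bar>?R x\<bar>) \<le> (b - a) ^ n / fact n * A"
    using ab by (intro cSUP_least) auto
  with remainder show ?thesis
    unfolding A_def by blast
qed

end
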